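(* Let $R\in\mathbb{Z}[x]$ be a nonzero polynomial with $R=\prod_{i=1}^{\deg R} r_i^{\,i}$, where $r_i\in\mathbb{Z}[x]$ are square-free and pairwise coprime. Let $I=(a,b)\subset\mathbb{R}$ be an interval containing a root $\alpha$ of $r_{i_0}$, and put $m_I=(a+b)/2$, $r_I=(b-a)/2$. If $T^{(r_{i_0})'}_{3/2}(m_I,8r_I)$ holds and $T^{r_i}_1(m_I,8r_I)$ holds for all $i\neq i_0$, then the disc $\Delta_{2r_I}(m_I)=\{z\in\mathbb{C}:|z-m_I|<2r_I\}$ contains $\alpha$ and no other complex root of $R$, and for every $z\in\mathbb{C}$ with $|z-m_I|=2r_I$, $$|R(z)|>2^{-i_0-\deg R}\,|R(m_I-2r_I)|.$$
   Context: For $p\in\mathbb{R}[x]$ and reals $m,r,K$, the predicate $T^p_K(m,r)$ means $|p(m)|-K\sum_{k\ge1}\left|\frac{p^{(k)}(m)}{k!}\right|r^k>0$, where $p^{(k)}$ is the $k$-th derivative of $p$. *)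

theory Defs
  imports "HOL-Analysis.Analysis" "HOL-Computational_Algebra.Computational_Algebra"
begin

text \<open>The test predicate T^p_K(m,r): |p(m)| - K * sum_{k>=1} |p^(k)(m)/k!| r^k > 0.
  The k-th derivatives vanish for k > degree p, so the sum is finite.\<close>
definition T_test :: "real poly \<Rightarrow> real \<Rightarrow> real \<Rightarrow> real \<Rightarrow> bool" where
  "T_test p K m r \<longleftrightarrow>
     \<bar>poly p m\<bar> - K * (\<Sum>k\<in>{1..degree p}. \<bar>poly ((pderiv ^^ k) p) m / fact k\<bar> * r ^ k) > 0"

end

theory Submission
  imports Defs
begin

text \<open>Expand every factor about the centre \<open>m\<close> in Taylor series. For \<open>i \<noteq> i\<^sub>0\<close> the test
  \<open>T\<^sub>1\<close> at radius \<open>8\<rho>\<close> keeps \<open>r\<^sub>i\<close> on the disc of radius \<open>2\<rho>\<close> within a quarter of the majorant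
  of \<open>|r\<^sub>i(m)|\<close>, so \<open>r\<^sub>i\<close> has no zero there and its modulus changes by at most a factor \<open>2\<close>.
  For \<open>r\<^sub>i\<^sub>0\<close> the test on the derivative makes the linear term \<open>r\<^sub>i\<^sub>0'(m) (z - \<alpha>)\<close> dominate, with
  relative error below \<open>1/6\<close>, so \<open>\<alpha>\<close> is its only zero in the disc and its modulus on the
  boundary circle is large compared with its value at \<open>m - 2\<rho>\<close>. Multiplying these estimates
  over the factors \<open>r\<^sub>i\<^sup>i\<close> gives the claim.\<close>

section \<open>Taylor expansion of real polynomials at complex points\<close>

lemma higher_pderiv_pcompose_shift:
  fixes p :: "'a::field_char_0 poly"
  shows "(pderiv ^^ k) (p \<circ>\<^sub>p [:a, 1:]) = ((pderiv ^^ k) p) \<circ>\<^sub>p [:a, 1:]"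
  by (induction k) (simp_all add: pderiv_pcompose pderiv_pCons)

lemma poly_add_taylor:
  fixes p :: "'a::field_char_0 poly"
  shows "poly p (a + h) = (\<Sum>k\<le>degree p. poly ((pderiv ^^ k) p) a / fact k * h ^ k)"
proof -
  define q where "q = p \<circ>\<^sub>p [:a, 1:]"
  have coeff_q: "coeff q k = poly ((pderiv ^^ k) p) a / fact k" for k
  proof -
    have "coeff ((pderiv ^^ k) q) 0 = fact k * coeff q k"
      using coeff_higher_pderiv[of k q 0] by (simp add: pochhammer_fact)
    moreover have "coeff ((pderiv ^^ k) q) 0 = poly ((pderiv ^^ k) p) a"
      by (simp add: q_def higher_pderiv_pcompose_shift poly_0_coeff_0[symmetric] poly_pcompose)
    ultimately show ?thesis by (simp add: field_simps)
  qed
  have degree_q: "degree q = degree p" by (simp add: q_def degree_pcompose)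
  have "poly p (a + h) = poly q h" by (simp add: q_def poly_pcompose add.commute)
  also have "\<dots> = (\<Sum>k\<le>degree q. coeff q k * h ^ k)" by (rule poly_altdef)
  finally show ?thesis by (simp only: coeff_q degree_q)
qed

lemma pderiv_map_poly_of_real:
  "pderiv (map_poly (of_real :: real \<Rightarrow> 'a::{real_algebra_1,field_char_0}) p) =
     map_poly of_real (pderiv p)"
  by (rule poly_eqI) (simp add: coeff_pderiv coeff_map_poly)

lemma higher_pderiv_map_poly_of_real:
  "(pderiv ^^ k) (map_poly (of_real :: real \<Rightarrow> 'a::{real_algebra_1,field_char_0}) p) =
     map_poly of_real ((pderiv ^^ k) p)"
  by (induction k) (simp_all add: pderiv_map_poly_of_real)

lemma poly_map_poly_of_real:
  "poly (map_poly (of_real :: real \<Rightarrow> 'a::{real_algebra_1,field_char_0}) p) (of_real x) =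
     of_real (poly p x)"
  by (induction p) (auto simp: map_poly_pCons)

definition taylor_coeff :: "real poly \<Rightarrow> real \<Rightarrow> nat \<Rightarrow> real" where
  "taylor_coeff p m k = poly ((pderiv ^^ k) p) m / fact k"

lemma taylor_coeff_pderiv:
  "taylor_coeff (pderiv p) m k = real (Suc k) * taylor_coeff p m (Suc k)"
proof -
  have "(pderiv ^^ k) (pderiv p) = (pderiv ^^ Suc k) p" by (simp only: funpow_Suc_right o_def)
  then show ?thesis by (simp add: taylor_coeff_def fact_Suc)
qed

lemma poly_of_real_taylor:
  "poly (map_poly of_real p) z =
     (\<Sum>k\<le>degree p. complex_of_real (taylor_coeff p m k) * (z - of_real m) ^ k)"
  using poly_add_taylor[of "map_poly complex_of_real p" "of_real m" "z - of_real m"]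
  by (simp add: degree_map_poly higher_pderiv_map_poly_of_real poly_map_poly_of_real
      taylor_coeff_def)

definition taylor_majorant :: "real poly \<Rightarrow> real \<Rightarrow> real \<Rightarrow> real" where
  "taylor_majorant p m r = (\<Sum>k\<in>{1..degree p}. \<bar>taylor_coeff p m k\<bar> * r ^ k)"

lemma T_test_iff: "T_test p K m r \<longleftrightarrow> K * taylor_majorant p m r < \<bar>poly p m\<bar>"
  by (simp add: T_test_def taylor_majorant_def taylor_coeff_def)

lemma taylor_majorant_nonneg: "0 \<le> r \<Longrightarrow> 0 \<le> taylor_majorant p m r"
  unfolding taylor_majorant_def by (intro sum_nonneg) auto

text \<open>A Lipschitz constant, on the closed disc of radius \<open>s\<close> about \<open>m\<close>, of \<open>p\<close> minus its
  linear Taylor polynomial at \<open>m\<close>.\<close>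

definition taylor_tail :: "real poly \<Rightarrow> real \<Rightarrow> real \<Rightarrow> real" where
  "taylor_tail p m s = (\<Sum>k\<in>{2..degree p}. real k * \<bar>taylor_coeff p m k\<bar> * s ^ (k - 1))"

lemma taylor_tail_nonneg: "0 \<le> s \<Longrightarrow> 0 \<le> taylor_tail p m s"
  unfolding taylor_tail_def by (intro sum_nonneg) auto

section \<open>Estimates on the disc\<close>

lemma four_mult_power_le:
  assumes "1 \<le> k" "0 \<le> x"
  shows "4 * x ^ k \<le> (4 * x :: real) ^ k"
proof -
  have "(4::real) \<le> 4 ^ k" using assms(1) by (cases k) auto
  then show ?thesis using assms(2) by (simp add: power_mult_distrib mult_right_mono)
qed

lemma norm_power_diff_le:
  fixes x y :: "'a::real_normed_field"
  assumes "norm x \<le> s" "norm y \<le> s"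
  shows "norm (x ^ k - y ^ k) \<le> real k * s ^ (k - 1) * norm (x - y)"
proof -
  have "0 \<le> s" using assms(1) norm_ge_zero[of x] by linarith
  have "norm (\<Sum>i<k. y ^ (k - Suc i) * x ^ i) \<le> (\<Sum>i<k. norm y ^ (k - Suc i) * norm x ^ i)"
    by (rule norm_sum[THEN order_trans]) (simp add: norm_mult norm_power)
  also have "\<dots> \<le> (\<Sum>i<k. s ^ (k - Suc i) * s ^ i)"
    using assms \<open>0 \<le> s\<close> by (intro sum_mono mult_mono power_mono) auto
  also have "\<dots> = real k * s ^ (k - 1)"
    by (simp add: power_add[symmetric])
  finally show ?thesis
    by (simp add: power_diff_sumr2 norm_mult mult_left_mono mult.commute)
qed

lemma norm_poly_sub_center_le:
  assumes "cmod (z - of_real m) \<le> 2 * \<rho>"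
  shows "cmod (poly (map_poly of_real p) z - of_real (poly p m)) \<le> taylor_majorant p m (8 * \<rho>) / 4"
proof -
  have \<rho>: "0 \<le> \<rho>" using assms norm_ge_zero[of "z - of_real m"] by linarith
  have "poly (map_poly of_real p) z - of_real (poly p m) =
      (\<Sum>k\<in>{1..degree p}. complex_of_real (taylor_coeff p m k) * (z - of_real m) ^ k)"
    by (simp add: poly_of_real_taylor[of p z m] atMost_atLeast0 sum.atLeast_Suc_atMost
        taylor_coeff_def)
  also have "cmod \<dots> \<le> (\<Sum>k\<in>{1..degree p}. \<bar>taylor_coeff p m k\<bar> * (8 * \<rho>) ^ k / 4)"
  proof (rule norm_sum[THEN order_trans], rule sum_mono)
    fix k :: nat assume "k \<in> {1..degree p}"
    then have "4 * (2 * \<rho>) ^ k \<le> (8 * \<rho>) ^ k"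
      using four_mult_power_le[of k "2 * \<rho>"] \<rho> by simp
    moreover have "cmod (z - of_real m) ^ k \<le> (2 * \<rho>) ^ k"
      using assms by (intro power_mono) auto
    ultimately have "cmod (z - of_real m) ^ k \<le> (8 * \<rho>) ^ k / 4" by simp
    then have "\<bar>taylor_coeff p m k\<bar> * cmod (z - of_real m) ^ k \<le> \<bar>taylor_coeff p m k\<bar> * ((8 * \<rho>) ^ k / 4)"
      by (rule mult_left_mono) simp
    then show "cmod (complex_of_real (taylor_coeff p m k) * (z - of_real m) ^ k)
        \<le> \<bar>taylor_coeff p m k\<bar> * (8 * \<rho>) ^ k / 4"
      by (simp add: norm_mult norm_power)
  qed
  also have "\<dots> = taylor_majorant p m (8 * \<rho>) / 4"
    by (simp add: taylor_majorant_def sum_divide_distrib)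
  finally show ?thesis .
qed

lemma norm_poly_linearization_le:
  assumes "cmod (u - of_real m) \<le> s" "cmod (v - of_real m) \<le> s"
  shows "cmod (poly (map_poly of_real p) u - poly (map_poly of_real p) v
            - of_real (taylor_coeff p m 1) * (u - v)) \<le> taylor_tail p m s * cmod (u - v)"
proof (cases "degree p = 0")
  case True
  then obtain c where "p = [:c:]" by (rule degree_eq_zeroE)
  then show ?thesis by (simp add: map_poly_pCons pderiv_pCons taylor_coeff_def taylor_tail_def)
next
  case False
  define g where "g k = complex_of_real (taylor_coeff p m k) * ((u - of_real m) ^ k - (v - of_real m) ^ k)" for k
  have "poly (map_poly of_real p) u - poly (map_poly of_real p) v = (\<Sum>k\<le>degree p. g k)"
    by (simp add: poly_of_real_taylor[of p _ m] g_def sum_subtractf right_diff_distrib)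
  also have "\<dots> = g 0 + (g 1 + (\<Sum>k\<in>{2..degree p}. g k))"
    using False by (simp add: atMost_atLeast0 sum.atLeast_Suc_atMost numeral_2_eq_2)
  finally have diff: "poly (map_poly of_real p) u - poly (map_poly of_real p) v
      - of_real (taylor_coeff p m 1) * (u - v) = (\<Sum>k\<in>{2..degree p}. g k)"
    by (simp add: g_def)
  have g: "cmod (g k) \<le> real k * \<bar>taylor_coeff p m k\<bar> * s ^ (k - 1) * cmod (u - v)" for k
  proof -
    have "cmod ((u - of_real m) ^ k - (v - of_real m) ^ k) \<le> real k * s ^ (k - 1) * cmod (u - v)"
      using norm_power_diff_le[OF assms, of k] by simp
    then have "\<bar>taylor_coeff p m k\<bar> * cmod ((u - of_real m) ^ k - (v - of_real m) ^ k)
        \<le> \<bar>taylor_coeff p m k\<bar> * (real k * s ^ (k - 1) * cmod (u - v))"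
      by (rule mult_left_mono) simp
    then show ?thesis by (simp add: g_def norm_mult mult_ac)
  qed
  have "cmod (\<Sum>k\<in>{2..degree p}. g k) \<le> (\<Sum>k\<in>{2..degree p}. cmod (g k))"
    by (rule norm_sum)
  also have "\<dots> \<le> taylor_tail p m s * cmod (u - v)"
    unfolding taylor_tail_def sum_distrib_right by (rule sum_mono) (rule g)
  finally show ?thesis by (simp only: diff)
qed

lemma norm_poly_close_to_center:
  assumes "cmod (u - of_real m) \<le> 2 * \<rho>"
  shows "\<bar>cmod (poly (map_poly of_real p) u) - \<bar>poly p m\<bar>\<bar> \<le> taylor_majorant p m (8 * \<rho>) / 4"
  using norm_triangle_ineq3[of "poly (map_poly of_real p) u" "of_real (poly p m)"]
    norm_poly_sub_center_le[OF assms, of p] by simp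

lemma norm_poly_close_to_linear:
  assumes "poly p \<alpha> = 0" "cmod (u - of_real m) \<le> s" "cmod (of_real \<alpha> - of_real m) \<le> s"
  shows "\<bar>cmod (poly (map_poly of_real p) u) - \<bar>taylor_coeff p m 1\<bar> * cmod (u - of_real \<alpha>)\<bar>
           \<le> taylor_tail p m s * cmod (u - of_real \<alpha>)"
  using norm_triangle_ineq3[of "poly (map_poly of_real p) u" "of_real (taylor_coeff p m 1) * (u - of_real \<alpha>)"]
    norm_poly_linearization_le[OF assms(2,3), of p] assms(1)
  by (simp add: poly_map_poly_of_real norm_mult)

section \<open>Consequences of the test predicates\<close>

lemma T_test_imp_norm_poly_pos:
  assumes "T_test p 1 m (8 * \<rho>)" "cmod (z - of_real m) \<le> 2 * \<rho>"
  shows "0 < cmod (poly (map_poly of_real p) z)"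
proof -
  have "\<bar>poly p m\<bar> - taylor_majorant p m (8 * \<rho>) / 4 \<le> cmod (poly (map_poly of_real p) z)"
    using norm_poly_close_to_center[OF assms(2), of p, unfolded abs_le_iff] by linarith
  moreover have "0 \<le> taylor_majorant p m (8 * \<rho>)"
    using assms(2) norm_ge_zero[of "z - of_real m"] by (intro taylor_majorant_nonneg) linarith
  ultimately show ?thesis using assms(1) unfolding T_test_iff by linarith
qed

lemma T_test_imp_norm_poly_ratio:
  assumes "T_test p 1 m (8 * \<rho>)" "cmod (z - of_real m) \<le> 2 * \<rho>" "cmod (w - of_real m) \<le> 2 * \<rho>"
  shows "(1/2) ^ degree p * cmod (poly (map_poly of_real p) w) \<le> cmod (poly (map_poly of_real p) z)"
proof -
  have \<rho>: "0 \<le> \<rho>" using assms(2) norm_ge_zero[of "z - of_real m"] by linarith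
  define S where "S = taylor_majorant p m (8 * \<rho>)"
  have S: "0 \<le> S" "S < \<bar>poly p m\<bar>"
    using assms(1) \<rho> taylor_majorant_nonneg by (auto simp: S_def T_test_iff)
  have z: "\<bar>poly p m\<bar> - S / 4 \<le> cmod (poly (map_poly of_real p) z)"
    and w: "cmod (poly (map_poly of_real p) w) \<le> \<bar>poly p m\<bar> + S / 4"
    using norm_poly_close_to_center[OF assms(2), of p, unfolded abs_le_iff]
      norm_poly_close_to_center[OF assms(3), of p, unfolded abs_le_iff]
    by (simp_all add: S_def)
  show ?thesis
  proof (cases "degree p")
    case 0
    then have "S = 0" by (simp add: S_def taylor_majorant_def)
    with 0 z w show ?thesis by simp
  next
    case (Suc d)
    have "(1/2) ^ degree p * cmod (poly (map_poly of_real p) w) \<le> 1/2 * cmod (poly (map_poly of_real p) w)"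
      using Suc by (intro mult_right_mono) (auto intro: power_le_one)
    with z w S show ?thesis by linarith
  qed
qed

lemma T_test_pderiv_imp_tail_small:
  assumes "0 \<le> \<rho>" "T_test (pderiv p) (3/2) m (8 * \<rho>)"
  shows "6 * taylor_tail p m (2 * \<rho>) < \<bar>taylor_coeff p m 1\<bar>"
proof -
  have majorant: "taylor_majorant (pderiv p) m (8 * \<rho>) =
      (\<Sum>k\<in>{2..degree p}. real k * \<bar>taylor_coeff p m k\<bar> * (8 * \<rho>) ^ (k - 1))"
  proof (cases "degree p")
    case (Suc n)
    show ?thesis
      unfolding taylor_majorant_def degree_pderiv Suc numeral_2_eq_2 sum.shift_bounds_cl_Suc_ivl
      by (simp add: taylor_coeff_pderiv abs_mult)
  qed (simp add: taylor_majorant_def degree_pderiv)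
  have "4 * taylor_tail p m (2 * \<rho>) \<le> taylor_majorant (pderiv p) m (8 * \<rho>)"
    unfolding majorant taylor_tail_def sum_distrib_left
  proof (rule sum_mono)
    fix k assume "k \<in> {2..degree p}"
    then have "1 \<le> k - 1" by auto
    then have "4 * (2 * \<rho>) ^ (k - 1) \<le> (8 * \<rho>) ^ (k - 1)"
      using four_mult_power_le[of "k - 1" "2 * \<rho>"] assms(1) by simp
    then show "4 * (real k * \<bar>taylor_coeff p m k\<bar> * (2 * \<rho>) ^ (k - 1))
        \<le> real k * \<bar>taylor_coeff p m k\<bar> * (8 * \<rho>) ^ (k - 1)"
      by (metis mult.left_commute mult_left_mono abs_ge_zero of_nat_0_le_iff zero_le_mult_iff)
  qed
  moreover have "3/2 * taylor_majorant (pderiv p) m (8 * \<rho>) < \<bar>taylor_coeff p m 1\<bar>"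
    using assms(2) by (simp add: T_test_iff taylor_coeff_def)
  ultimately show ?thesis by linarith
qed

lemma T_test_pderiv_root_unique:
  assumes "T_test (pderiv p) (3/2) m (8 * \<rho>)" "\<bar>\<alpha> - m\<bar> < \<rho>" "poly p \<alpha> = 0"
    and "cmod (z - of_real m) \<le> 2 * \<rho>" "poly (map_poly of_real p) z = 0"
  shows "z = of_real \<alpha>"
proof -
  have \<rho>: "0 \<le> \<rho>" using assms(2) by linarith
  have \<alpha>: "cmod (of_real \<alpha> - of_real m) \<le> 2 * \<rho>"
    using assms(2) by (simp flip: of_real_diff)
  have "(\<bar>taylor_coeff p m 1\<bar> - taylor_tail p m (2 * \<rho>)) * cmod (z - of_real \<alpha>) \<le> 0"
    using norm_poly_close_to_linear[OF assms(3,4) \<alpha>] assms(5) by (simp add: algebra_simps)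
  moreover have "0 < \<bar>taylor_coeff p m 1\<bar> - taylor_tail p m (2 * \<rho>)"
    using T_test_pderiv_imp_tail_small[OF \<rho> assms(1)] taylor_tail_nonneg[of "2 * \<rho>" p m] \<rho>
    by linarith
  ultimately show ?thesis by (simp add: mult_le_0_iff)
qed

text \<open>The factor \<open>3\<close> stems from comparing \<open>|m - 2\<rho> - \<alpha>| < 3\<rho>\<close> with \<open>|z - \<alpha>| > \<rho>\<close> on the
  circle \<open>|z - m| = 2\<rho>\<close>. For linear \<open>p\<close> the tail vanishes; otherwise \<open>(1/2)^(1 + degree p) \<le> 1/8\<close>
  absorbs a tail of relative size below \<open>1/6\<close>.\<close>

lemma T_test_pderiv_circle_factor:
  assumes "0 \<le> \<rho>" "T_test (pderiv p) (3/2) m (8 * \<rho>)"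
  shows "(1/2) ^ (1 + degree p) * (3 * (\<bar>taylor_coeff p m 1\<bar> + taylor_tail p m (2 * \<rho>)))
           < \<bar>taylor_coeff p m 1\<bar> - taylor_tail p m (2 * \<rho>)"
proof -
  define c where "c = \<bar>taylor_coeff p m 1\<bar>"
  define E where "E = taylor_tail p m (2 * \<rho>)"
  have cE: "0 \<le> E" "6 * E < c"
    using T_test_pderiv_imp_tail_small[OF assms] taylor_tail_nonneg assms(1)
    by (simp_all add: c_def E_def)
  have "(1/2) ^ (1 + degree p) * (3 * (c + E)) < c - E"
  proof (cases "degree p \<le> 1")
    case True
    have "degree p \<noteq> 0"
    proof
      assume "degree p = 0"
      then have "pderiv p = 0" by (simp add: pderiv_eq_0_iff)
      then show False using cE by (simp add: c_def taylor_coeff_def)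
    qed
    with True have "degree p = 1" by simp
    then show ?thesis using cE by (simp add: E_def taylor_tail_def)
  next
    case False
    then have "(1/2::real) ^ (1 + degree p) \<le> (1/2) ^ 3" by (intro power_decreasing) auto
    then have "(1/2::real) ^ (1 + degree p) \<le> 1/8" by (simp add: power3_eq_cube)
    then have "(1/2) ^ (1 + degree p) * (3 * (c + E)) \<le> 1/8 * (3 * (c + E))"
      using cE by (intro mult_right_mono) auto
    moreover have "1/8 * (3 * (c + E)) < c - E" using cE by (simp add: algebra_simps)
    ultimately show ?thesis by (rule le_less_trans)
  qed
  then show ?thesis by (simp add: c_def E_def)
qed

lemma T_test_pderiv_circle_bound:
  assumes "0 < \<rho>" "T_test (pderiv p) (3/2) m (8 * \<rho>)" "\<bar>\<alpha> - m\<bar> < \<rho>" "poly p \<alpha> = 0"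
    and "cmod (z - of_real m) = 2 * \<rho>"
  shows "(1/2) ^ (1 + degree p) * cmod (poly (map_poly of_real p) (of_real (m - 2 * \<rho>)))
           < cmod (poly (map_poly of_real p) z)"
proof -
  define c where "c = \<bar>taylor_coeff p m 1\<bar>"
  define E where "E = taylor_tail p m (2 * \<rho>)"
  define w where "w = complex_of_real (m - 2 * \<rho>)"
  have cE: "0 \<le> E" "6 * E < c"
    using T_test_pderiv_imp_tail_small[OF _ assms(2)] taylor_tail_nonneg assms(1)
    by (simp_all add: c_def E_def)
  have \<alpha>: "cmod (of_real \<alpha> - of_real m) \<le> 2 * \<rho>"
    using assms(3) by (simp flip: of_real_diff)
  have w: "cmod (w - of_real m) \<le> 2 * \<rho>"
    using assms(1) by (simp add: w_def flip: of_real_diff)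
  have "cmod (z - of_real m) \<le> cmod (z - of_real \<alpha>) + cmod (of_real \<alpha> - of_real m :: complex)"
    using norm_triangle_ineq[of "z - of_real \<alpha>" "of_real \<alpha> - of_real m"] by simp
  then have z_far: "\<rho> < cmod (z - of_real \<alpha>)"
    using assms(3,5) by (simp flip: of_real_diff)
  have "cmod (w - of_real \<alpha>) = \<bar>m - 2 * \<rho> - \<alpha>\<bar>" by (simp add: w_def flip: of_real_diff)
  then have w_near: "cmod (w - of_real \<alpha>) < 3 * \<rho>"
    using assms(1,3) by (simp add: abs_less_iff)
  have "(c - E) * \<rho> < (c - E) * cmod (z - of_real \<alpha>)"
    using z_far cE by (intro mult_strict_left_mono) auto
  also have "\<dots> \<le> cmod (poly (map_poly of_real p) z)"
    using norm_poly_close_to_linear[OF assms(4) _ \<alpha>, of z] assms(5)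
    by (simp add: c_def E_def algebra_simps)
  finally have z_bound: "(c - E) * \<rho> < cmod (poly (map_poly of_real p) z)" .
  have "cmod (poly (map_poly of_real p) w) \<le> (c + E) * cmod (w - of_real \<alpha>)"
    using norm_poly_close_to_linear[OF assms(4) w \<alpha>] by (simp add: c_def E_def algebra_simps)
  also have "\<dots> \<le> (c + E) * (3 * \<rho>)"
    using w_near cE by (intro mult_left_mono) auto
  finally have w_bound: "cmod (poly (map_poly of_real p) w) \<le> (c + E) * (3 * \<rho>)" .
  have "(1/2) ^ (1 + degree p) * cmod (poly (map_poly of_real p) w)
      \<le> (1/2) ^ (1 + degree p) * (3 * (c + E)) * \<rho>"
    using mult_left_mono[OF w_bound, of "(1/2) ^ (1 + degree p)"] by (simp add: algebra_simps)
  also have "\<dots> < (c - E) * \<rho>"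
    using T_test_pderiv_circle_factor[OF _ assms(2)] assms(1)
    by (intro mult_strict_right_mono) (simp_all add: c_def E_def)
  also note z_bound
  finally show ?thesis by (simp add: w_def)
qed

section \<open>Products of powers\<close>

lemma prod_power_ratio_less:
  fixes x y :: "nat \<Rightarrow> real" and d :: "nat \<Rightarrow> nat"
  assumes "finite I" "i0 \<in> I" "0 < i0" "\<forall>i\<in>I. 0 \<le> y i"
    and "\<forall>i\<in>I - {i0}. 0 < x i \<and> (1/2) ^ d i * y i \<le> x i"
    and "(1/2) ^ (1 + d i0) * y i0 < x i0"
  shows "inverse (2 ^ (i0 + (\<Sum>i\<in>I. i * d i))) * (\<Prod>i\<in>I. y i ^ i) < (\<Prod>i\<in>I. x i ^ i)"
proof -
  define A where "A i = ((1/2::real) ^ d i * y i) ^ i" for i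
  have A_eq: "A i = (1/2) ^ (i * d i) * y i ^ i" for i
    by (simp only: A_def power_mult_distrib power_mult[symmetric] mult.commute[of "d i" i])
  have "inverse (2 ^ (i0 + (\<Sum>i\<in>I. i * d i))) * (\<Prod>i\<in>I. y i ^ i)
      = (1/2) ^ i0 * ((1/2) ^ (\<Sum>i\<in>I. i * d i) * (\<Prod>i\<in>I. y i ^ i))"
    by (simp add: power_add power_one_over inverse_eq_divide)
  also have "(1/2) ^ (\<Sum>i\<in>I. i * d i) * (\<Prod>i\<in>I. y i ^ i) = (\<Prod>i\<in>I. A i)"
    by (simp only: A_eq prod.distrib power_sum)
  also have "\<dots> = A i0 * (\<Prod>i\<in>I - {i0}. A i)"
    by (rule prod.remove[OF assms(1,2)])
  also have "(1/2) ^ i0 * (A i0 * (\<Prod>i\<in>I - {i0}. A i))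
      \<le> (1/2) ^ i0 * A i0 * (\<Prod>i\<in>I - {i0}. x i ^ i)"
  proof -
    have "(\<Prod>i\<in>I - {i0}. A i) \<le> (\<Prod>i\<in>I - {i0}. x i ^ i)"
      using assms(4,5) unfolding A_def by (intro prod_mono) (auto intro: power_mono)
    moreover have "0 \<le> (1/2) ^ i0 * A i0"
      using assms(2,4) by (simp add: A_def)
    ultimately show ?thesis unfolding mult.assoc[symmetric] by (rule mult_left_mono)
  qed
  also have "\<dots> < x i0 ^ i0 * (\<Prod>i\<in>I - {i0}. x i ^ i)"
  proof (rule mult_strict_right_mono)
    have "((1/2) ^ (1 + d i0) * y i0) ^ i0 < x i0 ^ i0"
      using assms(2-4,6) by (intro power_strict_mono) auto
    moreover have "(1/2) ^ (1 + d i0) * y i0 = 1/2 * ((1/2) ^ d i0 * y i0)" by simp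
    ultimately show "(1/2) ^ i0 * A i0 < x i0 ^ i0"
      unfolding A_def by (simp only: power_mult_distrib)
    show "0 < (\<Prod>i\<in>I - {i0}. x i ^ i)"
      using assms(5) by (intro prod_pos) auto
  qed
  also have "\<dots> = (\<Prod>i\<in>I. x i ^ i)"
    by (rule prod.remove[OF assms(1,2), symmetric])
  finally show ?thesis .
qed

lemma prod_power_root_in_disc_unique:
  fixes p :: "nat \<Rightarrow> real poly"
  assumes "finite I" "i0 \<in> I" "\<bar>\<alpha> - m\<bar> < \<rho>" "poly (p i0) \<alpha> = 0"
    and "T_test (pderiv (p i0)) (3/2) m (8 * \<rho>)"
    and "\<forall>i\<in>I - {i0}. T_test (p i) 1 m (8 * \<rho>)"
    and "cmod (z - of_real m) \<le> 2 * \<rho>"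
    and "(\<Prod>i\<in>I. poly (map_poly of_real (p i)) z ^ i) = 0"
  shows "z = of_real \<alpha>"
proof -
  obtain i where i: "i \<in> I" "poly (map_poly of_real (p i)) z = 0"
    using assms(1,8) prod_zero_iff by fastforce
  show ?thesis
  proof (cases "i = i0")
    case True
    then show ?thesis using T_test_pderiv_root_unique[OF assms(5,3,4,7)] i by simp
  next
    case False
    then show ?thesis using T_test_imp_norm_poly_pos[OF _ assms(7)] assms(6) i by auto
  qed
qed

lemma prod_power_circle_bound:
  fixes p :: "nat \<Rightarrow> real poly"
  assumes "finite I" "i0 \<in> I" "0 < i0" "0 < \<rho>" "\<bar>\<alpha> - m\<bar> < \<rho>" "poly (p i0) \<alpha> = 0"
    and "T_test (pderiv (p i0)) (3/2) m (8 * \<rho>)"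
    and "\<forall>i\<in>I - {i0}. T_test (p i) 1 m (8 * \<rho>)"
    and "cmod (z - of_real m) = 2 * \<rho>"
  shows "inverse (2 ^ (i0 + (\<Sum>i\<in>I. i * degree (p i))))
           * cmod (\<Prod>i\<in>I. poly (map_poly of_real (p i)) (of_real (m - 2 * \<rho>)) ^ i)
         < cmod (\<Prod>i\<in>I. poly (map_poly of_real (p i)) z ^ i)"
proof -
  have w: "cmod (complex_of_real (m - 2 * \<rho>) - of_real m) \<le> 2 * \<rho>"
    using assms(4) by (simp flip: of_real_diff)
  have z: "cmod (z - of_real m) \<le> 2 * \<rho>" using assms(9) by simp
  show ?thesis
    unfolding prod_norm[symmetric] norm_power
  proof (rule prod_power_ratio_less[OF assms(1-3)])
    show "\<forall>i\<in>I - {i0}. 0 < cmod (poly (map_poly of_real (p i)) z) \<and>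
        (1/2) ^ degree (p i) * cmod (poly (map_poly of_real (p i)) (of_real (m - 2 * \<rho>)))
          \<le> cmod (poly (map_poly of_real (p i)) z)"
      using T_test_imp_norm_poly_pos[OF _ z] T_test_imp_norm_poly_ratio[OF _ z w] assms(8) by blast
    show "(1/2) ^ (1 + degree (p i0)) * cmod (poly (map_poly of_real (p i0)) (of_real (m - 2 * \<rho>)))
        < cmod (poly (map_poly of_real (p i0)) z)"
      by (rule T_test_pderiv_circle_bound[OF assms(4,7,5,6,9)])
  qed simp
qed

section \<open>The factored integer polynomial\<close>

lemma pderiv_map_poly_of_int:
  "pderiv (map_poly (of_int :: int \<Rightarrow> 'a::idom) p) = map_poly of_int (pderiv p)"
  by (rule poly_eqI) (simp add: coeff_pderiv coeff_map_poly)

lemma map_poly_of_int_mult: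
  "map_poly (of_int :: int \<Rightarrow> 'a::comm_ring_1) (p * q) = map_poly of_int p * map_poly of_int q"
  by (rule poly_eqI) (simp add: coeff_map_poly coeff_mult)

lemma map_poly_of_int_prod_power:
  "map_poly (of_int :: int \<Rightarrow> 'a::comm_ring_1) (\<Prod>i\<in>A. f i ^ i) = (\<Prod>i\<in>A. map_poly of_int (f i) ^ i)"
proof -
  have power: "map_poly (of_int :: int \<Rightarrow> 'a) (q ^ n) = map_poly of_int q ^ n" for q n
    by (induction n) (simp_all add: map_poly_of_int_mult)
  show ?thesis
    by (induction A rule: infinite_finite_induct) (simp_all add: map_poly_of_int_mult power)
qed

lemma degree_prod_power:
  fixes r :: "nat \<Rightarrow> 'a::idom poly"
  assumes "\<forall>i\<in>A. r i \<noteq> 0"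
  shows "degree (\<Prod>i\<in>A. r i ^ i) = (\<Sum>i\<in>A. i * degree (r i))"
  using assms by (auto simp: degree_prod_eq_sum_degree degree_power_eq intro!: sum.cong)

theorem lemma1:
  fixes R :: "int poly" and r :: "nat \<Rightarrow> int poly" and i0 :: nat
    and a b \<alpha> :: real
  assumes "R \<noteq> 0"
    and "R = (\<Prod>i\<in>{1..degree R}. r i ^ i)"
    and "\<forall>i\<in>{1..degree R}. squarefree (r i)"
    and "\<forall>i\<in>{1..degree R}. \<forall>j\<in>{1..degree R}. i \<noteq> j \<longrightarrow> coprime (r i) (r j)"
    and "a < b"
    and "i0 \<in> {1..degree R}"
    and "\<alpha> \<in> {a<..<b}"
    and "poly (map_poly of_int (r i0)) \<alpha> = 0"
    and "T_test (map_poly of_int (pderiv (r i0))) (3/2) ((a+b)/2) (8 * ((b-a)/2))"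
    and "\<forall>i\<in>{1..degree R}. i \<noteq> i0 \<longrightarrow>
           T_test (map_poly of_int (r i)) 1 ((a+b)/2) (8 * ((b-a)/2))"
  shows "cmod (complex_of_real \<alpha> - complex_of_real ((a+b)/2)) < 2 * ((b-a)/2)
       \<and> (\<forall>z::complex. cmod (z - complex_of_real ((a+b)/2)) < 2 * ((b-a)/2)
              \<and> poly (map_poly of_int R) z = 0 \<longrightarrow> z = complex_of_real \<alpha>)
       \<and> (\<forall>z::complex. cmod (z - complex_of_real ((a+b)/2)) = 2 * ((b-a)/2) \<longrightarrow>
              cmod (poly (map_poly of_int R) z)
                > inverse (2 ^ (i0 + degree R))
                  * cmod (poly (map_poly of_int R) (complex_of_real ((a+b)/2 - 2 * ((b-a)/2)))))"
proof -
  define m \<rho> I where "m = (a + b) / 2" and "\<rho> = (b - a) / 2" and "I = {1..degree R}"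
  define p where "p i = (map_poly of_int (r i) :: real poly)" for i
  have I: "finite I" "i0 \<in> I" "0 < i0" using assms(6) by (auto simp: I_def)
  have R: "R = (\<Prod>i\<in>I. r i ^ i)" unfolding I_def by (rule assms(2))
  have \<alpha>: "\<bar>\<alpha> - m\<bar> < \<rho>" and \<rho>: "0 < \<rho>"
    using assms(5,7) by (auto simp: m_def \<rho>_def abs_if field_simps)
  have root: "poly (p i0) \<alpha> = 0" using assms(8) by (simp add: p_def)
  have T0: "T_test (pderiv (p i0)) (3/2) m (8 * \<rho>)"
    using assms(9) by (simp add: p_def m_def \<rho>_def pderiv_map_poly_of_int)
  have Ti: "\<forall>i\<in>I - {i0}. T_test (p i) 1 m (8 * \<rho>)"
    using assms(10) by (simp add: p_def m_def \<rho>_def I_def)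
  have eval: "poly (map_poly of_int R) z = (\<Prod>i\<in>I. poly (map_poly of_real (p i)) z ^ i)" for z :: complex
    by (simp add: R p_def map_poly_of_int_prod_power poly_prod map_poly_map_poly o_def)
  have "(\<Prod>i\<in>I. r i ^ i) \<noteq> 0" using assms(1) R by simp
  then have "\<forall>i\<in>I. r i \<noteq> 0" by (auto simp: I_def prod_zero_iff)
  then have deg: "degree R = (\<Sum>i\<in>I. i * degree (p i))"
    by (simp add: R degree_prod_power p_def degree_map_poly)
  have "cmod (complex_of_real \<alpha> - of_real m) < 2 * \<rho>"
    using \<alpha> by (simp flip: of_real_diff)
  then show ?thesis
    unfolding m_def[symmetric] \<rho>_def[symmetric] eval deg
    using prod_power_root_in_disc_unique[OF I(1,2) \<alpha> root T0 Ti]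
      prod_power_circle_bound[OF I \<rho> \<alpha> root T0 Ti]
    by (auto simp: less_imp_le)
qed

end
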